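(* Let $k \geq l$ be positive integers with $k \geq 2$, and let $A \subset \mathbb{N}$ be such that the set $A^k + A^l$ has positive lower density. Then there is a constant $C>0$ such that for infinitely many positive integers $X$, $$A(X) \geq C\,\frac{\sqrt{X}}{(\log X)^{\alpha(k,l)}}, \qquad \text{where } \alpha(k,l) = \frac{k+l-2}{k+l}.$$
   Context: $\mathbb{N}$ denotes the set of positive integers. For sets $A,B$ of integers, $AB=\{ab: a\in A, b\in B\}$, $A+B=\{a+b: a\in A,b\in B\}$, $A^1=A$ and $A^k = A A^{k-1}$ for $k>1$. For $A\subset\mathbb{N}_0$ and $X>0$, $A(X)=|A\cap[1,X]|$. The lower density of $A$ is $\liminf_{X\to\infty} A(X)/X$. *)

theory Defs
  imports "HOL-Analysis.Analysis"
begin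

definition setprod :: "nat set \<Rightarrow> nat set \<Rightarrow> nat set" where
  "setprod A B = {a * b | a b. a \<in> A \<and> b \<in> B}"

definition setsum :: "nat set \<Rightarrow> nat set \<Rightarrow> nat set" where
  "setsum A B = {a + b | a b. a \<in> A \<and> b \<in> B}"

fun setpow :: "nat set \<Rightarrow> nat \<Rightarrow> nat set" where
  "setpow A 0 = {1}"
| "setpow A (Suc k) = setprod A (setpow A k)"

definition counting :: "nat set \<Rightarrow> real \<Rightarrow> nat" where
  "counting A X = card {a \<in> A. 1 \<le> a \<and> real a \<le> X}"

definition lower_density :: "nat set \<Rightarrow> ereal" where
  "lower_density A = Liminf at_top (\<lambda>X::real. ereal (real (counting A X) / X))"

end

(*
  Put b = 2 / (k + l). If the conclusion failed, then A(X) = o(sqrt X / (log X)^(1-b)), so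
  A(2^i) = o(2^(i/2) i^(b-1)). Sorting the first factor of a product a a' <= 2^n by its dyadic
  size bounds the counting function of A A^j at 2^n by a convolution of those of A and A^j.
  The discrete Beta sums  sum_i i^(b-1) (n+1-i)^g  are O(n^(b+g)), so a Toeplitz argument gives
  inductively A^j(2^n) = o(2^(n/2) n^(jb-1)). As (kb - 1) + (lb - 1) = 0, this yields
  (A^k + A^l)(2^n) <= A^k(2^n) A^l(2^n) = o(2^n), contradicting the positive lower density.
*)

theory Submission
  imports Defs "HOL-Library.Landau_Symbols"
begin

section \<open>Discrete Beta kernels\<close>

lemma powr_succ_minus_powr_ge:
  fixes q x :: real
  assumes "0 < q" "q < 1" "0 < x"
  shows "q * (x + 1) powr (q - 1) \<le> (x + 1) powr q - x powr q"
proof -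
  have deriv: "\<And>t. x \<le> t \<Longrightarrow> t \<le> x + 1 \<Longrightarrow>
      ((\<lambda>t. t powr q) has_real_derivative q * t powr (q - 1)) (at t)"
    using assms by (intro has_real_derivative_powr) auto
  obtain z where z: "x < z" "z < x + 1" "(x + 1) powr q - x powr q = (x + 1 - x) * (q * z powr (q - 1))"
    using MVT2[of x "x + 1" "\<lambda>t. t powr q" "\<lambda>t. q * t powr (q - 1)", OF _ deriv] by auto
  have "(x + 1) powr (q - 1) \<le> z powr (q - 1)"
    using z assms by (intro powr_mono2') auto
  with z assms show ?thesis by simp
qed

lemma sum_powr_le:
  fixes p :: real
  assumes "-1 < p"
  shows "\<exists>c. \<forall>N. (\<Sum>i=1..N. real i powr p) \<le> c * real N powr (p + 1)"
proof (cases "p < 0")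
  case True
  have "(\<Sum>i=1..N. real i powr p) \<le> real N powr (p + 1) / (p + 1)" for N
  proof (induction N)
    case (Suc N)
    have "real (Suc N) powr p \<le> (real (Suc N) powr (p + 1) - real N powr (p + 1)) / (p + 1)"
    proof (cases "N = 0")
      case False
      then have "(p + 1) * (real N + 1) powr p \<le> (real N + 1) powr (p + 1) - real N powr (p + 1)"
        using powr_succ_minus_powr_ge[of "p + 1" "real N"] assms True by simp
      then show ?thesis
        using assms by (simp add: pos_le_divide_eq mult.commute add.commute)
    qed (use assms True in simp)
    with Suc show ?case by (simp add: diff_divide_distrib)
  qed simp
  then show ?thesis
    by (intro exI[of _ "1 / (p + 1)"]) simp
next
  case False
  have "(\<Sum>i=1..N. real i powr p) \<le> real N powr (p + 1)" for N
  proof -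
    have "(\<Sum>i=1..N. real i powr p) \<le> (\<Sum>i=1..N. real N powr p)"
      using False by (intro sum_mono powr_mono2) auto
    also have "\<dots> \<le> real N powr (p + 1)"
      by (cases "N = 0") (simp_all add: powr_add)
    finally show ?thesis .
  qed
  then show ?thesis by (intro exI[of _ 1]) simp
qed

lemma powr_le_two_powr_abs_mult:
  fixes y N g :: real
  assumes "N / 2 \<le> y" "y \<le> N" "0 < N"
  shows "y powr g \<le> 2 powr \<bar>g\<bar> * N powr g"
proof (cases "g \<ge> 0")
  case True
  have "y powr g \<le> N powr g" using assms True by (intro powr_mono2) auto
  also have "\<dots> \<le> 2 powr \<bar>g\<bar> * N powr g"
    using True mult_right_mono[of 1 "2 powr g" "N powr g"] by (simp add: ge_one_powr_ge_zero)
  finally show ?thesis .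
next
  case False
  have "y powr g \<le> (N / 2) powr g" using assms False by (intro powr_mono2') auto
  also have "\<dots> = 2 powr \<bar>g\<bar> * N powr g"
    using False assms by (simp add: powr_divide powr_minus divide_simps)
  finally show ?thesis .
qed

lemma powr_mult_powr_reflect_le:
  fixes p q :: real
  assumes i: "1 \<le> i" "i \<le> N"
  shows "real i powr p * real (N + 1 - i) powr q \<le>
    2 powr \<bar>q\<bar> * real N powr q * real i powr p + 2 powr \<bar>p\<bar> * real N powr p * real (N + 1 - i) powr q"
proof (cases "2 * i \<le> N + 1")
  case True
  have "real (N + 1 - i) powr q \<le> 2 powr \<bar>q\<bar> * real N powr q"
    using True i by (intro powr_le_two_powr_abs_mult) auto
  from mult_left_mono[OF this, of "real i powr p"]
  have "real i powr p * real (N + 1 - i) powr q \<le> 2 powr \<bar>q\<bar> * real N powr q * real i powr p"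
    by (simp add: mult_ac)
  moreover have "0 \<le> 2 powr \<bar>p\<bar> * real N powr p * real (N + 1 - i) powr q" by simp
  ultimately show ?thesis by linarith
next
  case False
  have "real i powr p \<le> 2 powr \<bar>p\<bar> * real N powr p"
    using False i by (intro powr_le_two_powr_abs_mult) auto
  then have "real i powr p * real (N + 1 - i) powr q \<le> 2 powr \<bar>p\<bar> * real N powr p * real (N + 1 - i) powr q"
    by (intro mult_right_mono) auto
  moreover have "0 \<le> 2 powr \<bar>q\<bar> * real N powr q * real i powr p" by simp
  ultimately show ?thesis by linarith
qed

lemma beta_sum_le:
  fixes b g :: real
  assumes "0 < b" "-1 < g"
  shows "\<exists>K. \<forall>N\<ge>1. (\<Sum>i=1..N. real i powr (b - 1) * real (N + 1 - i) powr g) \<le> K * real N powr (b + g)"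
proof -
  obtain c1 where c1: "\<And>N. (\<Sum>i=1..N. real i powr (b - 1)) \<le> c1 * real N powr (b - 1 + 1)"
    using sum_powr_le[of "b - 1"] assms by auto
  obtain c2 where c2: "\<And>N. (\<Sum>i=1..N. real i powr g) \<le> c2 * real N powr (g + 1)"
    using sum_powr_le[of g] assms by auto
  define A where "A = 2 powr \<bar>g\<bar>"
  define B where "B = 2 powr \<bar>b - 1\<bar>"
  have "(\<Sum>i=1..N. real i powr (b - 1) * real (N + 1 - i) powr g) \<le> (A * c1 + B * c2) * real N powr (b + g)"
    if "N \<ge> 1" for N
  proof -
    have "(\<Sum>i=1..N. real i powr (b - 1) * real (N + 1 - i) powr g) \<le>
       (\<Sum>i=1..N. A * real N powr g * real i powr (b - 1) + B * real N powr (b - 1) * real (N + 1 - i) powr g)"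
      unfolding A_def B_def by (intro sum_mono powr_mult_powr_reflect_le) auto
    also have "\<dots> = A * real N powr g * (\<Sum>i=1..N. real i powr (b - 1)) + B * real N powr (b - 1) * (\<Sum>i=1..N. real (N + 1 - i) powr g)"
      by (simp add: sum.distrib sum_distrib_left)
    also have "(\<Sum>i=1..N. real (N + 1 - i) powr g) = (\<Sum>i=1..N. real i powr g)"
      using sum.atLeastAtMost_rev[of "\<lambda>i. real i powr g" 1 N] by (simp add: add.commute)
    also have "A * real N powr g * (\<Sum>i=1..N. real i powr (b - 1)) + B * real N powr (b - 1) * (\<Sum>i=1..N. real i powr g)
      \<le> A * real N powr g * (c1 * real N powr (b - 1 + 1)) + B * real N powr (b - 1) * (c2 * real N powr (g + 1))"
      unfolding A_def B_def using c1 c2 by (intro add_mono mult_left_mono) auto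
    also have "\<dots> = (A * c1 + B * c2) * real N powr (b + g)"
      using that by (simp add: algebra_simps flip: powr_add)
    finally show ?thesis .
  qed
  then show ?thesis by blast
qed

definition beta_weight :: "real \<Rightarrow> real \<Rightarrow> nat \<Rightarrow> nat \<Rightarrow> real" where
  "beta_weight b g N i = real i powr (b - 1) * real (N + 1 - i) powr g / real N powr (b + g)"

lemma beta_weight_nonneg: "0 \<le> beta_weight b g N i"
  by (simp add: beta_weight_def)

lemma sum_beta_weight_le:
  assumes "0 < b" "-1 < g"
  shows "\<exists>K. \<forall>N. (\<Sum>i\<le>N. beta_weight b g N i) \<le> K"
proof -
  obtain K where K: "\<And>N. N \<ge> 1 \<Longrightarrow> (\<Sum>i=1..N. real i powr (b - 1) * real (N + 1 - i) powr g) \<le> K * real N powr (b + g)"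
    using beta_sum_le[OF assms] by auto
  have "(\<Sum>i\<le>N. beta_weight b g N i) \<le> max K 0" if "N \<ge> 1" for N
  proof -
    \<comment> \<open>The term \<open>i = 0\<close> vanishes because \<open>0 powr _ = 0\<close>.\<close>
    have "(\<Sum>i\<le>N. beta_weight b g N i) = (\<Sum>i=1..N. beta_weight b g N i)"
      by (simp add: atMost_atLeast0 sum.atLeast_Suc_atMost beta_weight_def)
    also have "\<dots> = (\<Sum>i=1..N. real i powr (b - 1) * real (N + 1 - i) powr g) / real N powr (b + g)"
      by (simp add: beta_weight_def sum_divide_distrib)
    also have "\<dots> \<le> K"
      using K[of N] that by (simp add: divide_le_eq)
    also have "K \<le> max K 0" by simp
    finally show ?thesis .
  qed
  moreover have "(\<Sum>i\<le>0. beta_weight b g 0 i) = 0"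
    by (simp add: beta_weight_def)
  ultimately have "(\<Sum>i\<le>N. beta_weight b g N i) \<le> max K 0" for N
    by (cases "N = 0") auto
  then show ?thesis by blast
qed

lemma beta_weight_tendsto_zero:
  assumes "0 < b"
  shows "(\<lambda>N. beta_weight b g N i) \<longlonglongrightarrow> 0"
proof (cases "i = 0")
  case False
  define c where "c = 2 powr \<bar>g\<bar> * real i powr (b - 1)"
  have bound: "beta_weight b g N i \<le> c * real N powr (-b)" if N: "2 * i \<le> N" for N
  proof -
    have "real (N + 1 - i) powr g \<le> 2 powr \<bar>g\<bar> * real N powr g"
      using N False by (intro powr_le_two_powr_abs_mult) auto
    then have "beta_weight b g N i \<le> real i powr (b - 1) * (2 powr \<bar>g\<bar> * real N powr g) / real N powr (b + g)"
      unfolding beta_weight_def by (intro divide_right_mono mult_left_mono) simp_all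
    also have "\<dots> = c * (real N powr g / real N powr (b + g))"
      by (simp only: c_def times_divide_eq_right mult_ac)
    also have "real N powr g / real N powr (b + g) = real N powr (-b)"
      by (simp flip: powr_diff)
    finally show ?thesis .
  qed
  have upper: "eventually (\<lambda>N. beta_weight b g N i \<le> c * real N powr (-b)) sequentially"
    unfolding eventually_sequentially using bound by blast
  have lim: "(\<lambda>N. c * real N powr (-b)) \<longlonglongrightarrow> 0"
    using assms by (intro tendsto_mult_right_zero tendsto_neg_powr filterlim_real_sequentially) auto
  show ?thesis
    by (rule tendsto_sandwich[OF _ upper tendsto_const lim]) (simp add: beta_weight_nonneg)
qed (simp add: beta_weight_def)

lemma toeplitz_sum_le:
  fixes x :: "nat \<Rightarrow> real" and w :: "nat \<Rightarrow> nat \<Rightarrow> real"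
  assumes x: "\<And>i. 0 \<le> x i" "\<And>i. x i \<le> X" "\<And>i. I \<le> i \<Longrightarrow> x i \<le> e"
    and w_nonneg: "\<And>i. 0 \<le> w N i" and w_sum: "(\<Sum>i\<le>N. w N i) \<le> K" and "0 \<le> e"
  shows "(\<Sum>i\<le>N. w N i * x i) \<le> e * K + X * (\<Sum>i<I. w N i)"
proof -
  have "(\<Sum>i\<le>N. w N i * x i) \<le> (\<Sum>i\<le>N. e * w N i + X * (if i < I then w N i else 0))"
  proof (intro sum_mono)
    fix i
    show "w N i * x i \<le> e * w N i + X * (if i < I then w N i else 0)"
    proof (cases "i < I")
      case True
      have "w N i * x i \<le> X * w N i"
        using mult_left_mono[OF x(2) w_nonneg] by (simp add: mult.commute)
      moreover have "0 \<le> e * w N i" using \<open>0 \<le> e\<close> w_nonneg[of i] by simp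
      ultimately show ?thesis using True by simp
    next
      case False
      then show ?thesis
        using mult_left_mono[OF x(3) w_nonneg] by (simp add: mult.commute)
    qed
  qed
  also have "\<dots> = e * (\<Sum>i\<le>N. w N i) + X * (\<Sum>i\<in>{..N} \<inter> {..<I}. w N i)"
    by (simp add: sum.distrib sum_distrib_left sum.inter_restrict)
  also have "\<dots> \<le> e * K + X * (\<Sum>i<I. w N i)"
  proof (rule add_mono)
    show "e * (\<Sum>i\<le>N. w N i) \<le> e * K"
      using \<open>0 \<le> e\<close> w_sum by (simp add: mult_left_mono)
    have "(\<Sum>i\<in>{..N} \<inter> {..<I}. w N i) \<le> (\<Sum>i<I. w N i)"
      by (rule sum_mono2) (auto simp: w_nonneg)
    then show "X * (\<Sum>i\<in>{..N} \<inter> {..<I}. w N i) \<le> X * (\<Sum>i<I. w N i)"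
      using order_trans[OF x(1,2)] by (simp add: mult_left_mono)
  qed
  finally show ?thesis .
qed

text \<open>Toeplitz: the tail of \<open>x\<close> is uniformly small, and each of the first columns of \<open>w\<close> is null.\<close>
lemma toeplitz_tendsto_zero:
  fixes x :: "nat \<Rightarrow> real" and w :: "nat \<Rightarrow> nat \<Rightarrow> real"
  assumes x: "x \<longlonglongrightarrow> 0" and x_nonneg: "\<And>i. 0 \<le> x i"
    and w_nonneg: "\<And>N i. 0 \<le> w N i" and w_sum: "\<And>N. (\<Sum>i\<le>N. w N i) \<le> K"
    and w_column: "\<And>i. (\<lambda>N. w N i) \<longlonglongrightarrow> 0"
  shows "(\<lambda>N. \<Sum>i\<le>N. w N i * x i) \<longlonglongrightarrow> 0"
proof (rule order_tendstoI)
  fix a :: real assume "a < 0"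
  then show "eventually (\<lambda>N. a < (\<Sum>i\<le>N. w N i * x i)) sequentially"
    using w_nonneg x_nonneg by (intro always_eventually allI less_le_trans[OF _ sum_nonneg]) auto
next
  fix \<epsilon> :: real assume "0 < \<epsilon>"
  obtain X where X: "\<And>i. x i \<le> X"
    using BseqE[OF convergent_imp_Bseq[OF convergentI[OF x]]] by (metis abs_le_D1 real_norm_def)
  have K: "0 \<le> K" using w_sum[of 0] w_nonneg[of 0 0] by simp
  define e where "e = \<epsilon> / (2 * (K + 1))"
  have e: "0 < e" "e * K < \<epsilon> / 2"
    using \<open>0 < \<epsilon>\<close> K by (auto simp: e_def field_simps)
  obtain I where I: "\<And>i. I \<le> i \<Longrightarrow> x i \<le> e"
    using LIMSEQ_D[OF x e(1)] x_nonneg by (metis abs_of_nonneg diff_zero less_imp_le real_norm_def)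
  have "(\<lambda>N. X * (\<Sum>i<I. w N i)) \<longlonglongrightarrow> 0"
    by (intro tendsto_mult_right_zero tendsto_null_sum w_column)
  then have "eventually (\<lambda>N. X * (\<Sum>i<I. w N i) < \<epsilon> / 2) sequentially"
    using \<open>0 < \<epsilon>\<close> by (intro order_tendstoD(2)) auto
  then show "eventually (\<lambda>N. (\<Sum>i\<le>N. w N i * x i) < \<epsilon>) sequentially"
  proof eventually_elim
    case (elim N)
    have "(\<Sum>i\<le>N. w N i * x i) \<le> e * K + X * (\<Sum>i<I. w N i)"
      using x_nonneg X I w_nonneg w_sum e(1) by (intro toeplitz_sum_le) (auto simp: less_imp_le)
    with elim e(2) show ?case by linarith
  qed
qed

lemma convolution_tendsto_zero:
  fixes x y :: "nat \<Rightarrow> real" and w :: "nat \<Rightarrow> nat \<Rightarrow> real"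
  assumes x: "x \<longlonglongrightarrow> 0" and y: "Bseq y"
    and w_nonneg: "\<And>N i. 0 \<le> w N i" and w_sum: "\<And>N. (\<Sum>i\<le>N. w N i) \<le> K"
    and w_column: "\<And>i. (\<lambda>N. w N i) \<longlonglongrightarrow> 0"
  shows "(\<lambda>N. \<Sum>i\<le>N. w N i * x i * y (N - i)) \<longlonglongrightarrow> 0"
proof -
  obtain Y where Y: "\<And>j. \<bar>y j\<bar> \<le> Y"
    using BseqE[OF y] by (metis real_norm_def)
  have "(\<lambda>N. \<Sum>i\<le>N. w N i * \<bar>x i\<bar>) \<longlonglongrightarrow> 0"
    by (rule toeplitz_tendsto_zero[OF tendsto_rabs_zero[OF x] abs_ge_zero w_nonneg w_sum w_column])
  then have lim: "(\<lambda>N. (\<Sum>i\<le>N. w N i * \<bar>x i\<bar>) * Y) \<longlonglongrightarrow> 0"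
    by (rule tendsto_mult_left_zero)
  have bound: "norm (\<Sum>i\<le>N. w N i * x i * y (N - i)) \<le> (\<Sum>i\<le>N. w N i * \<bar>x i\<bar>) * Y" for N
  proof -
    have "norm (\<Sum>i\<le>N. w N i * x i * y (N - i)) \<le> (\<Sum>i\<le>N. w N i * \<bar>x i\<bar> * Y)"
    proof (rule sum_norm_le)
      fix i
      show "norm (w N i * x i * y (N - i)) \<le> w N i * \<bar>x i\<bar> * Y"
        using mult_left_mono[OF Y, of "w N i * \<bar>x i\<bar>"] w_nonneg[of N i] by (simp add: abs_mult)
    qed
    then show ?thesis by (simp add: sum_distrib_right)
  qed
  show ?thesis
    by (rule Lim_null_comparison[OF always_eventually[OF allI[OF bound]] lim])
qed

section \<open>Counting functions of product sets and sumsets\<close>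

definition count_upto :: "nat set \<Rightarrow> nat \<Rightarrow> nat" where
  "count_upto A x = card (A \<inter> {1..x})"

lemma counting_of_nat: "counting A (real x) = count_upto A x"
  unfolding counting_def count_upto_def by (rule arg_cong[where f = card]) auto

lemma zero_notin_setpow: "0 \<notin> A \<Longrightarrow> 0 \<notin> setpow A j"
  by (induction j) (auto simp: setprod_def intro: gr0I)

lemma setpow_1: "setpow A 1 = A"
  by (auto simp: setprod_def)

lemma count_upto_setsum_le:
  assumes "0 \<notin> P" "0 \<notin> Q"
  shows "count_upto (setsum P Q) x \<le> count_upto P x * count_upto Q x"
proof -
  have "setsum P Q \<inter> {1..x} \<subseteq> (\<lambda>(a, b). a + b) ` ((P \<inter> {1..x}) \<times> (Q \<inter> {1..x}))"
  proof
    fix s assume "s \<in> setsum P Q \<inter> {1..x}"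
    then obtain a b where "s = a + b" "a \<in> P" "b \<in> Q" "a + b \<le> x"
      by (auto simp: setsum_def)
    moreover have "1 \<le> a" "1 \<le> b" using \<open>a \<in> P\<close> \<open>b \<in> Q\<close> assms by (auto simp: Suc_le_eq intro: gr0I)
    ultimately show "s \<in> (\<lambda>(a, b). a + b) ` ((P \<inter> {1..x}) \<times> (Q \<inter> {1..x}))" by force
  qed
  then have "count_upto (setsum P Q) x \<le> card ((\<lambda>(a, b). a + b) ` ((P \<inter> {1..x}) \<times> (Q \<inter> {1..x})))"
    unfolding count_upto_def by (intro card_mono) auto
  also have "\<dots> \<le> card ((P \<inter> {1..x}) \<times> (Q \<inter> {1..x}))"
    by (intro card_image_le) simp
  finally show ?thesis by (simp add: count_upto_def card_cartesian_product)
qed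

text \<open>If \<open>2^(i-1) \<le> a < 2^i\<close> and \<open>a b \<le> 2^n\<close>, then \<open>b \<le> 2^(n+1-i)\<close>.\<close>
lemma count_upto_setprod_dyadic:
  "count_upto (setprod A B) (2 ^ n) \<le> (\<Sum>i=1..n+1. count_upto A (2 ^ i) * count_upto B (2 ^ (n + 1 - i)))"
proof -
  define P where "P i = A \<inter> {1..2 ^ i}" for i :: nat
  define Q where "Q i = B \<inter> {1..2 ^ (n + 1 - i)}" for i :: nat
  have "setprod A B \<inter> {1..2 ^ n} \<subseteq> (\<Union>i\<in>{1..n+1}. (\<lambda>(a, b). a * b) ` (P i \<times> Q i))"
  proof
    fix x assume "x \<in> setprod A B \<inter> {1..2 ^ n}"
    then obtain a b where x: "x = a * b" "a \<in> A" "b \<in> B" "1 \<le> a * b" "a * b \<le> 2 ^ n"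
      by (auto simp: setprod_def)
    then have ab: "1 \<le> a" "1 \<le> b" by (auto simp: Suc_le_eq)
    obtain m where m: "2 ^ m \<le> a" "a < 2 ^ (m + 1)"
      using ex_power_ivl1[of 2 a] ab by auto
    have "a \<le> a * b" using ab by simp
    then have "(2::nat) ^ m \<le> 2 ^ n" using m x by linarith
    then have mn: "m \<le> n" by simp
    have "2 ^ m * b \<le> a * b" using m by simp
    also have "\<dots> \<le> 2 ^ m * 2 ^ (n - m)" using x mn by (simp flip: power_add)
    finally have "b \<le> 2 ^ (n - m)" by simp
    then have "a \<in> P (m + 1)" "b \<in> Q (m + 1)"
      unfolding P_def Q_def using x ab m by auto
    then show "x \<in> (\<Union>i\<in>{1..n+1}. (\<lambda>(a, b). a * b) ` (P i \<times> Q i))"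
      using mn x by (intro UN_I[of "m + 1"]) auto
  qed
  then have "count_upto (setprod A B) (2 ^ n) \<le> card (\<Union>i\<in>{1..n+1}. (\<lambda>(a, b). a * b) ` (P i \<times> Q i))"
    unfolding count_upto_def by (intro card_mono) (auto simp: P_def Q_def)
  also have "\<dots> \<le> (\<Sum>i=1..n+1. card ((\<lambda>(a, b). a * b) ` (P i \<times> Q i)))"
    by (rule card_UN_le) simp
  also have "\<dots> \<le> (\<Sum>i=1..n+1. card (P i \<times> Q i))"
    by (intro sum_mono card_image_le) (simp add: P_def Q_def)
  finally show ?thesis
    by (simp add: P_def Q_def count_upto_def card_cartesian_product)
qed

section \<open>Growth along powers of two\<close>

lemma Bseq_divide_if_bigo:
  fixes f g :: "nat \<Rightarrow> real"
  assumes "f \<in> O(g)"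
  shows "Bseq (\<lambda>n. f n / g n)"
proof -
  obtain c where "c > 0" "eventually (\<lambda>n. norm (f n) \<le> c * norm (g n)) sequentially"
    using landau_o.bigE[OF assms] by blast
  then have "eventually (\<lambda>n. norm (f n / g n) \<le> c) sequentially"
    by (auto elim!: eventually_mono simp: divide_le_eq)
  with \<open>c > 0\<close> show ?thesis
    unfolding Bfun_def by blast
qed

lemma count_upto_setprod_le_convolution:
  fixes u v :: "nat \<Rightarrow> real"
  assumes u: "\<And>i. 1 \<le> i \<Longrightarrow> real (count_upto A (2 ^ i)) = u i * (sqrt (2 ^ i) * real i powr (b - 1))"
    and v: "\<And>m. real (count_upto B (2 ^ m)) = v m * (sqrt (2 ^ m) * real (m + 1) powr g)"
    and nonneg: "\<And>i. 0 \<le> u i" "\<And>m. 0 \<le> v m"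
  shows "real (count_upto (setprod A B) (2 ^ n)) \<le>
    sqrt 2 * (\<Sum>i\<le>n + 1. beta_weight b g (n + 1) i * u i * v (n + 1 - i)) * (sqrt (2 ^ n) * real (n + 1) powr (b + g))"
proof -
  define N where "N = n + 1"
  have factorized: "real (count_upto A (2 ^ i) * count_upto B (2 ^ (N - i))) =
      sqrt (2 ^ N) * real N powr (b + g) * (beta_weight b g N i * u i * v (N - i))"
    if i: "1 \<le> i" "i \<le> N" for i
  proof -
    have sqrt_split: "sqrt (2 ^ i) * sqrt (2 ^ (N - i)) = sqrt ((2::real) ^ N)"
      using i by (simp flip: real_sqrt_mult power_add)
    have weight: "real N powr (b + g) * beta_weight b g N i = real i powr (b - 1) * real (N + 1 - i) powr g"
      using i by (simp add: beta_weight_def N_def)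
    have "real (count_upto A (2 ^ i) * count_upto B (2 ^ (N - i))) =
        (sqrt (2 ^ i) * sqrt (2 ^ (N - i))) * (real i powr (b - 1) * real (N - i + 1) powr g) * (u i * v (N - i))"
      by (simp only: of_nat_mult u[OF i(1)] v mult_ac)
    also have "N - i + 1 = N + 1 - i" using i by simp
    finally show ?thesis
      by (simp only: sqrt_split weight [symmetric] mult_ac)
  qed
  have "real (count_upto (setprod A B) (2 ^ n)) \<le> (\<Sum>i=1..N. real (count_upto A (2 ^ i) * count_upto B (2 ^ (N - i))))"
    unfolding N_def of_nat_sum[symmetric] of_nat_le_iff by (rule count_upto_setprod_dyadic)
  also have "\<dots> = (\<Sum>i=1..N. sqrt (2 ^ N) * real N powr (b + g) * (beta_weight b g N i * u i * v (N - i)))"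
    by (intro sum.cong refl factorized) auto
  also have "\<dots> = sqrt (2 ^ N) * real N powr (b + g) * (\<Sum>i=1..N. beta_weight b g N i * u i * v (N - i))"
    by (simp add: sum_distrib_left)
  also have "\<dots> \<le> sqrt (2 ^ N) * real N powr (b + g) * (\<Sum>i\<le>N. beta_weight b g N i * u i * v (N - i))"
    using beta_weight_nonneg nonneg by (intro mult_left_mono sum_mono2) auto
  also have "\<dots> = sqrt 2 * (\<Sum>i\<le>N. beta_weight b g N i * u i * v (N - i)) * (sqrt (2 ^ n) * real (n + 1) powr (b + g))"
    by (simp add: N_def real_sqrt_mult)
  finally show ?thesis
    by (simp add: N_def)
qed

lemma smallo_count_setprod:
  fixes b g :: real
  assumes b: "0 < b" and g: "-1 < g"
    and A: "(\<lambda>i. real (count_upto A (2 ^ i))) \<in> o(\<lambda>i. sqrt (2 ^ i) * real i powr (b - 1))"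
    and B: "(\<lambda>m. real (count_upto B (2 ^ m))) \<in> O(\<lambda>m. sqrt (2 ^ m) * real (m + 1) powr g)"
  shows "(\<lambda>n. real (count_upto (setprod A B) (2 ^ n))) \<in> o(\<lambda>n. sqrt (2 ^ n) * real (n + 1) powr (b + g))"
proof -
  define u where "u i = real (count_upto A (2 ^ i)) / (sqrt (2 ^ i) * real i powr (b - 1))" for i
  define v where "v m = real (count_upto B (2 ^ m)) / (sqrt (2 ^ m) * real (m + 1) powr g)" for m
  have u: "u \<longlonglongrightarrow> 0"
    unfolding u_def by (rule smalloD_tendsto[OF A])
  have v: "Bseq v"
    unfolding v_def by (rule Bseq_divide_if_bigo[OF B])
  obtain K where K: "\<And>N. (\<Sum>i\<le>N. beta_weight b g N i) \<le> K"
    using sum_beta_weight_le[OF b g] by blast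
  define W where "W N = (\<Sum>i\<le>N. beta_weight b g N i * u i * v (N - i))" for N
  have "W \<longlonglongrightarrow> 0"
    unfolding W_def using u v beta_weight_nonneg K beta_weight_tendsto_zero[OF b]
    by (rule convolution_tendsto_zero)
  then have W_lim: "(\<lambda>n. sqrt 2 * W (n + 1)) \<longlonglongrightarrow> 0"
    using LIMSEQ_Suc by (intro tendsto_mult_right_zero) simp
  have "real (count_upto (setprod A B) (2 ^ n)) \<le> sqrt 2 * W (n + 1) * (sqrt (2 ^ n) * real (n + 1) powr (b + g))" for n
    unfolding W_def by (rule count_upto_setprod_le_convolution) (simp_all add: u_def v_def)
  then have bound: "real (count_upto (setprod A B) (2 ^ n)) / (sqrt (2 ^ n) * real (n + 1) powr (b + g))
      \<le> sqrt 2 * W (n + 1)" for n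
    by (simp add: divide_le_eq)
  have "(\<lambda>n. real (count_upto (setprod A B) (2 ^ n)) / (sqrt (2 ^ n) * real (n + 1) powr (b + g))) \<longlonglongrightarrow> 0"
    by (rule tendsto_sandwich[OF _ always_eventually[OF allI[OF bound]] tendsto_const W_lim]) simp
  then show ?thesis
    by (rule smalloI_tendsto) simp
qed

lemma smallo_count_setpow:
  fixes b :: real
  assumes b: "0 < b"
    and A: "(\<lambda>i. real (count_upto A (2 ^ i))) \<in> o(\<lambda>i. sqrt (2 ^ i) * real i powr (b - 1))"
    and "1 \<le> j"
  shows "(\<lambda>m. real (count_upto (setpow A j) (2 ^ m))) \<in> o(\<lambda>m. sqrt (2 ^ m) * real (m + 1) powr (real j * b - 1))"
  using \<open>1 \<le> j\<close>
proof (induction j rule: dec_induct)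
  case base
  have "eventually (\<lambda>i. norm (real i powr (b - 1)) \<le> 2 powr \<bar>b - 1\<bar> * norm (real (i + 1) powr (b - 1))) sequentially"
    unfolding eventually_sequentially
    by (intro exI[of _ 1] allI impI) (auto intro: powr_le_two_powr_abs_mult)
  then have "(\<lambda>i. real i powr (b - 1)) \<in> O(\<lambda>i. real (i + 1) powr (b - 1))"
    by (intro landau_o.bigI[of "2 powr \<bar>b - 1\<bar>"]) auto
  then have "(\<lambda>i. sqrt (2 ^ i) * real i powr (b - 1)) \<in> O(\<lambda>i. sqrt (2 ^ i) * real (i + 1) powr (b - 1))"
    by (rule landau_o.big.mult_left)
  with A show ?case
    unfolding setpow_1 by (simp add: landau_o.small_big_trans)
next
  case (step j)
  have g: "-1 < real j * b - 1"
    using step.hyps b by simp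
  have "(\<lambda>m. real (count_upto (setprod A (setpow A j)) (2 ^ m))) \<in>
      o(\<lambda>m. sqrt (2 ^ m) * real (m + 1) powr (b + (real j * b - 1)))"
    by (rule smallo_count_setprod[OF b g A landau_o.small_imp_big[OF step.IH]])
  moreover have "b + (real j * b - 1) = real (Suc j) * b - 1"
    by (simp add: algebra_simps)
  ultimately show ?case by simp
qed

lemma smallo_count_setsum:
  assumes "0 \<notin> P" "0 \<notin> Q"
    and "(\<lambda>x. real (count_upto P (h x))) \<in> o[F](f)" "(\<lambda>x. real (count_upto Q (h x))) \<in> o[F](g)"
  shows "(\<lambda>x. real (count_upto (setsum P Q) (h x))) \<in> o[F](\<lambda>x. f x * g x)"
proof -
  have "(\<lambda>x. real (count_upto (setsum P Q) (h x))) \<in> O[F](\<lambda>x. real (count_upto P (h x)) * real (count_upto Q (h x)))"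
    using count_upto_setsum_le[OF assms(1,2)]
    by (intro landau_o.bigI[of 1] always_eventually allI) (simp_all flip: of_nat_mult)
  also have "(\<lambda>x. real (count_upto P (h x)) * real (count_upto Q (h x))) \<in> o[F](\<lambda>x. f x * g x)"
    using assms(3,4) by (rule landau_o.small.mult)
  finally show ?thesis .
qed

lemma smallo_if_not_frequently_ge:
  fixes f g :: "nat \<Rightarrow> real"
  assumes "\<not> (\<exists>C>0. \<exists>\<^sub>\<infinity>X. X > 0 \<and> f X \<ge> C * g X)" and "\<And>X. 0 \<le> f X"
  shows "f \<in> o(g)"
proof (rule landau_o.smallI)
  fix c :: real
  assume "0 < c"
  with assms(1) have "\<forall>\<^sub>\<infinity>X. \<not> (X > 0 \<and> f X \<ge> c * g X)"
    by (simp add: not_frequently)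
  moreover have "\<forall>\<^sub>\<infinity>X::nat. X > 0"
    by (simp add: cofinite_eq_sequentially eventually_gt_at_top)
  ultimately show "eventually (\<lambda>X. norm (f X) \<le> c * norm (g X)) at_top"
    unfolding cofinite_eq_sequentially
    by eventually_elim (use assms(2) \<open>0 < c\<close> in \<open>auto intro: order_trans[OF _ mult_left_mono[OF abs_ge_self]]\<close>)
qed

lemma smallo_count_dyadic:
  assumes "(\<lambda>X. real (count_upto A X)) \<in> o(\<lambda>X. sqrt (real X) / ln (real X) powr a)"
  shows "(\<lambda>i. real (count_upto A (2 ^ i))) \<in> o(\<lambda>i. sqrt (2 ^ i) * real i powr (-a))"
proof -
  have "filterlim (\<lambda>i::nat. (2::nat) ^ i) at_top sequentially"
    by (simp add: filterlim_subseq strict_mono_def)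
  from landau_o.small.compose[OF assms this]
  have "(\<lambda>i. real (count_upto A (2 ^ i))) \<in> o(\<lambda>i. sqrt (2 ^ i) / ln (2 ^ i) powr a)"
    by simp
  \<comment> \<open>Also at \<open>i = 0\<close>, where both sides are \<open>0\<close> because \<open>x / 0 = 0\<close> and \<open>0 powr _ = 0\<close>.\<close>
  also have "(\<lambda>i. sqrt (2 ^ i) / ln (2 ^ i) powr a) = (\<lambda>i. ln 2 powr (-a) * (sqrt (2 ^ i) * real i powr (-a)))"
    by (simp add: ln_realpow powr_mult powr_minus divide_inverse mult_ac)
  finally show ?thesis
    by simp
qed

lemma not_smallo_count_dyadic:
  assumes "lower_density S > 0"
  shows "(\<lambda>n. real (count_upto S (2 ^ n))) \<notin> o(\<lambda>n. 2 ^ n)"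
proof
  assume small: "(\<lambda>n. real (count_upto S (2 ^ n))) \<in> o(\<lambda>n. 2 ^ n)"
  obtain r where r: "0 < ereal r" "ereal r < Liminf at_top (\<lambda>X. ereal (real (counting S X) / X))"
    using assms ereal_dense2 unfolding lower_density_def by blast
  have "eventually (\<lambda>X. r < real (counting S X) / X) at_top"
    using less_LiminfD[OF r(2)] by simp
  moreover have "filterlim (\<lambda>n::nat. real ((2::nat) ^ n)) at_top sequentially"
    by (intro filterlim_compose[OF filterlim_real_sequentially]) (simp add: filterlim_subseq strict_mono_def)
  ultimately have "eventually (\<lambda>n. r < real (count_upto S (2 ^ n)) / real ((2::nat) ^ n)) sequentially"
    unfolding counting_of_nat [symmetric] by (rule eventually_compose_filterlim)
  moreover have "eventually (\<lambda>n. real (count_upto S (2 ^ n)) \<le> r * 2 ^ n) sequentially"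
    using landau_o.smallD[OF small, of r] r(1) by simp
  ultimately have "eventually (\<lambda>n. False) sequentially"
    by eventually_elim (simp add: less_divide_eq)
  then show False by simp
qed

theorem theorem1p1:
  fixes k l :: nat and A :: "nat set"
  assumes "1 \<le> l" and "l \<le> k" and "2 \<le> k"
    and "A \<subseteq> {1..}"
    and "lower_density (setsum (setpow A k) (setpow A l)) > 0"
  shows "\<exists>C::real. C > 0 \<and>
    (\<exists>\<^sub>\<infinity>X::nat. X > 0 \<and>
       real (counting A (real X)) \<ge>
         C * sqrt (real X) / (ln (real X)) powr ((real k + real l - 2) / (real k + real l)))"
proof (rule ccontr)
  assume contra: "\<not> ?thesis"
  define b where "b = 2 / (real k + real l)"
  have b: "0 < b" and alpha: "(real k + real l - 2) / (real k + real l) = 1 - b"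
    and exponents: "(real k * b - 1) + (real l * b - 1) = 0"
    using assms(1-3) by (simp_all add: b_def field_simps)
  have "(\<lambda>X. real (count_upto A X)) \<in> o(\<lambda>X. sqrt (real X) / ln (real X) powr (1 - b))"
    using contra by (intro smallo_if_not_frequently_ge) (simp_all add: alpha counting_of_nat)
  then have A: "(\<lambda>i. real (count_upto A (2 ^ i))) \<in> o(\<lambda>i. sqrt (2 ^ i) * real i powr (b - 1))"
    using smallo_count_dyadic by fastforce
  have "0 \<notin> A" using assms(4) by auto
  then have "(\<lambda>n. real (count_upto (setsum (setpow A k) (setpow A l)) (2 ^ n))) \<in>
      o(\<lambda>n. (sqrt (2 ^ n) * real (n + 1) powr (real k * b - 1)) * (sqrt (2 ^ n) * real (n + 1) powr (real l * b - 1)))"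
    using assms(1-3) by (intro smallo_count_setsum smallo_count_setpow[OF b A] zero_notin_setpow) auto
  also have "(\<lambda>n. (sqrt (2 ^ n) * real (n + 1) powr (real k * b - 1)) * (sqrt (2 ^ n) * real (n + 1) powr (real l * b - 1))) =
      (\<lambda>n. 2 ^ n)"
    using exponents by (simp add: mult_ac flip: powr_add)
  finally show False
    using not_smallo_count_dyadic[OF assms(5)] by blast
qed

end
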